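(* Let $(\mathbf W^B,\mathbf W^E)=(\{W^{B,n}\},\{W^{E,n}\})$ be a general sequence of wire-tap channels, $W^{B,n}$ from $\mathcal X^n$ to $\mathcal Y^n$ and $W^{E,n}$ from $\mathcal X^n$ to $\mathcal Z^n$. Then $$C_d(\mathbf W^B,\mathbf W^E)\le\sup_{\mathbf p,\mathbf Q}\big\{\underline I(1|\mathbf p,\mathbf W^B\mathbf Q)-\overline I(0|\mathbf p,\mathbf W^E\mathbf Q)\big\},$$ $$C_I(\mathbf W^B,\mathbf W^E)\le\sup_{\mathbf p,\mathbf Q}\big\{\underline I(1|\mathbf p,\mathbf W^B\mathbf Q)-\overline I(0|\mathbf p,\mathbf W^E\mathbf Q)\big\},$$ where the suprema range over all sequences of sets $\tilde{\mathcal X}^n$, all sequences $\mathbf Q=\{Q^n\}$ of channels from $\tilde{\mathcal X}^n$ to $\mathcal X^n$, and all sequences $\mathbf p=\{p^n\}$ of distributions on $\tilde{\mathcal X}^n$.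
   Context: Channels are maps $x\mapsto W_x$ into probability distributions on a finite or countable output set; $W_p(y)=\sum_xp(x)W_x(y)$. For $\mathbf W=\{W^n\}$ and $\mathbf Q=\{Q^n\}$, $\mathbf W\mathbf Q=\{W^nQ^n\}$ with $(W^nQ^n)_{\tilde x}(y):=\sum_{x\in\mathcal X^n}W^n_x(y)Q^n_{\tilde x}(x)$. A wire-tap code $\Phi=(M,\{Q_i\},\{\mathcal D_i\})$ for $(W^B,W^E)$: input distributions $Q_1,\dots,Q_M$, pairwise disjoint decoding sets $\mathcal D_i$ for the main receiver; $|\Phi|=M$, $\epsilon_B(\Phi)=\frac1M\sum_iW^B_{Q_i}(\mathcal D_i^c)$, $I_E(\Phi)=\sum_i\frac1MD(W^E_{Q_i}\|W^E_\Phi)$ with $W^E_\Phi=\frac1M\sum_iW^E_{Q_i}$, $d_E(\Phi)=\frac1{M(M-1)}\sum_{i\ne j}\sum_z|W^E_{Q_i}(z)-W^E_{Q_j}(z)|$. $C_d(\mathbf W^B,\mathbf W^E):=\sup\{\liminf_n\frac1n\log|\Phi_n|\}$ over sequences of wire-tap codes with $\epsilon_B(\Phi_n)\to0$, $d_E(\Phi_n)\to0$; $C_I$ the same with $I_E(\Phi_n)/n\to0$ instead of $d_E(\Phi_n)\to0$. $\overline I(\epsilon|\mathbf p,\mathbf W):=\inf\{a:\limsup_n\mathrm{E}_{p^n}W^n_x\{y:\frac1n\log\frac{W^n_x(y)}{W^n_{p^n}(y)}>a\}\le\epsilon\}$, $\underline I(\epsilon|\mathbf p,\mathbf W):=\inf\{a:\liminf_n\mathrm{E}_{p^n}W^n_x\{y:\frac1n\log\frac{W^n_x(y)}{W^n_{p^n}(y)}>a\}\le\epsilon\}$,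 with "$\le\epsilon$" replaced by "$<1$" when $\epsilon=1$. *)

theory Defs
  imports "HOL-Analysis.Analysis" "HOL-Probability.Probability"
begin

text \<open>Channels are maps into discrete probability distributions (pmfs); a sequence
  of channels is indexed by the block length n.  Logarithms are natural logarithms.\<close>

definition out_dist :: "('x \<Rightarrow> 'y pmf) \<Rightarrow> 'x pmf \<Rightarrow> 'y pmf" where
  "out_dist W q = bind_pmf q W"

definition chan_comp :: "(nat \<Rightarrow> 'x \<Rightarrow> 'y pmf) \<Rightarrow> (nat \<Rightarrow> 'u \<Rightarrow> 'x pmf) \<Rightarrow> nat \<Rightarrow> 'u \<Rightarrow> 'y pmf" where
  "chan_comp W Q = (\<lambda>n u. bind_pmf (Q n u) (W n))"

definition KL_pmf :: "'a pmf \<Rightarrow> 'a pmf \<Rightarrow> real" where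
  "KL_pmf P R = (\<Sum>\<^sub>\<infinity>z. pmf P z * ln (pmf P z / pmf R z))"

definition l1_pmf :: "'a pmf \<Rightarrow> 'a pmf \<Rightarrow> real" where
  "l1_pmf P R = (\<Sum>\<^sub>\<infinity>z. \<bar>pmf P z - pmf R z\<bar>)"

definition wiretap_code :: "'x set \<Rightarrow> nat \<Rightarrow> (nat \<Rightarrow> 'x pmf) \<Rightarrow> (nat \<Rightarrow> 'y set) \<Rightarrow> bool" where
  "wiretap_code X M Qs Ds \<longleftrightarrow> M \<ge> 1 \<and> (\<forall>i<M. set_pmf (Qs i) \<subseteq> X) \<and> disjoint_family_on Ds {..<M}"

definition eps_B :: "('x \<Rightarrow> 'y pmf) \<Rightarrow> nat \<Rightarrow> (nat \<Rightarrow> 'x pmf) \<Rightarrow> (nat \<Rightarrow> 'y set) \<Rightarrow> real" where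
  "eps_B WB M Qs Ds = (1 / real M) * (\<Sum>i<M. measure_pmf.prob (out_dist WB (Qs i)) (- Ds i))"

definition code_out :: "('x \<Rightarrow> 'z pmf) \<Rightarrow> nat \<Rightarrow> (nat \<Rightarrow> 'x pmf) \<Rightarrow> 'z pmf" where
  "code_out WE M Qs = bind_pmf (pmf_of_set {..<M}) (\<lambda>i. out_dist WE (Qs i))"

definition I_E :: "('x \<Rightarrow> 'z pmf) \<Rightarrow> nat \<Rightarrow> (nat \<Rightarrow> 'x pmf) \<Rightarrow> real" where
  "I_E WE M Qs = (\<Sum>i<M. (1 / real M) * KL_pmf (out_dist WE (Qs i)) (code_out WE M Qs))"

definition d_E :: "('x \<Rightarrow> 'z pmf) \<Rightarrow> nat \<Rightarrow> (nat \<Rightarrow> 'x pmf) \<Rightarrow> real" where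
  "d_E WE M Qs = (1 / (real M * (real M - 1))) *
     (\<Sum>i<M. \<Sum>j\<in>{..<M} - {i}. l1_pmf (out_dist WE (Qs i)) (out_dist WE (Qs j)))"

definition C_d :: "(nat \<Rightarrow> 'x set) \<Rightarrow> (nat \<Rightarrow> 'x \<Rightarrow> 'y pmf) \<Rightarrow> (nat \<Rightarrow> 'x \<Rightarrow> 'z pmf) \<Rightarrow> ereal" where
  "C_d Xs WB WE = Sup {liminf (\<lambda>n. ereal (ln (real (M n)) / real n)) | M Qs Ds.
      (\<forall>n. wiretap_code (Xs n) (M n) (Qs n) (Ds n)) \<and>
      (\<lambda>n. eps_B (WB n) (M n) (Qs n) (Ds n)) \<longlonglongrightarrow> 0 \<and>
      (\<lambda>n. d_E (WE n) (M n) (Qs n)) \<longlonglongrightarrow> 0}"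

definition C_I :: "(nat \<Rightarrow> 'x set) \<Rightarrow> (nat \<Rightarrow> 'x \<Rightarrow> 'y pmf) \<Rightarrow> (nat \<Rightarrow> 'x \<Rightarrow> 'z pmf) \<Rightarrow> ereal" where
  "C_I Xs WB WE = Sup {liminf (\<lambda>n. ereal (ln (real (M n)) / real n)) | M Qs Ds.
      (\<forall>n. wiretap_code (Xs n) (M n) (Qs n) (Ds n)) \<and>
      (\<lambda>n. eps_B (WB n) (M n) (Qs n) (Ds n)) \<longlonglongrightarrow> 0 \<and>
      (\<lambda>n. I_E (WE n) (M n) (Qs n) / real n) \<longlonglongrightarrow> 0}"

definition spec_prob :: "(nat \<Rightarrow> 'u pmf) \<Rightarrow> (nat \<Rightarrow> 'u \<Rightarrow> 'y pmf) \<Rightarrow> nat \<Rightarrow> real \<Rightarrow> real" where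
  "spec_prob p W n a = measure_pmf.expectation (p n) (\<lambda>x.
     measure_pmf.prob (W n x) {y. ln (pmf (W n x) y / pmf (out_dist (W n) (p n)) y) / real n > a})"

definition I_sup :: "real \<Rightarrow> (nat \<Rightarrow> 'u pmf) \<Rightarrow> (nat \<Rightarrow> 'u \<Rightarrow> 'y pmf) \<Rightarrow> ereal" where
  "I_sup eps p W = Inf (ereal ` {a. if eps = 1
       then limsup (\<lambda>n. ereal (spec_prob p W n a)) < 1
       else limsup (\<lambda>n. ereal (spec_prob p W n a)) \<le> ereal eps})"

definition I_inf :: "real \<Rightarrow> (nat \<Rightarrow> 'u pmf) \<Rightarrow> (nat \<Rightarrow> 'u \<Rightarrow> 'y pmf) \<Rightarrow> ereal" where
  "I_inf eps p W = Inf (ereal ` {a. if eps = 1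
       then liminf (\<lambda>n. ereal (spec_prob p W n a)) < 1
       else liminf (\<lambda>n. ereal (spec_prob p W n a)) \<le> ereal eps})"

text \<open>The right-hand side: supremum over sequences of auxiliary input sets (realised as
  countable subsets of nat, namely the supports of p^n), distributions p^n and channels Q^n
  into the input alphabets; pairs for which the difference is the undefined
  infinity minus infinity are excluded.\<close>
definition wt_bound :: "(nat \<Rightarrow> 'x set) \<Rightarrow> (nat \<Rightarrow> 'x \<Rightarrow> 'y pmf) \<Rightarrow> (nat \<Rightarrow> 'x \<Rightarrow> 'z pmf) \<Rightarrow> ereal" where
  "wt_bound Xs WB WE = Sup {I_inf 1 p (chan_comp WB Q) - I_sup 0 p (chan_comp WE Q) |
      (p :: nat \<Rightarrow> nat pmf) (Q :: nat \<Rightarrow> nat \<Rightarrow> 'x pmf).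
      (\<forall>n. \<forall>u\<in>set_pmf (p n). set_pmf (Q n u) \<subseteq> Xs n) \<and>
      \<not> (I_inf 1 p (chan_comp WB Q) = \<infinity> \<and> I_sup 0 p (chan_comp WE Q) = \<infinity>)}"

end

theory Submission
  imports Defs
begin

text \<open>Take as auxiliary input the uniformly distributed message index and as \<open>Q\<^sup>n\<close> the
  encoder of the \<open>n\<close>-th code.  For the legitimate receiver, the Verdu-Han bound
  \<open>1 - Pr[i(X;Y) > t] \<le> \<epsilon>\<^sub>B + e\<^sup>t / M\<close> pushes the information spectrum above every
  rate below \<open>liminf (1/n) log M\<close>, so the spectral inf-information rate is at least the rate of
  the codes.  For the eavesdropper, each codeword's output has density at most \<open>M\<close> with respect
  to the mixture output, and then either \<open>d\<^sub>E\<close> tending to \<open>0\<close> or \<open>I\<^sub>E / n\<close> tending to \<open>0\<close>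
  forces \<open>Pr[(1/n) i(X;Z) > a]\<close> to vanish for every \<open>a > 0\<close>: the spectral sup-information
  rate is at most \<open>0\<close>.\<close>

lemma summable_on_real_bounded:
  fixes f g :: "'a \<Rightarrow> real"
  assumes "g summable_on A" "\<And>x. x \<in> A \<Longrightarrow> \<bar>f x\<bar> \<le> g x"
  shows "f summable_on A"
proof -
  have "(\<lambda>x. norm (f x)) summable_on A"
    by (rule summable_on_comparison_test[OF assms(1)]) (use assms(2) in auto)
  then show ?thesis using abs_summable_summable by blast
qed

lemma pmf_summable_on: "pmf p summable_on A"
proof -
  have "(\<lambda>x. norm (pmf p x)) summable_on A"
    using abs_summable_equivalent pmf_abs_summable by blast
  then show ?thesis by simp
qed

lemma measure_pmf_eq_infsum: "measure_pmf.prob p A = infsum (pmf p) A"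
  by (simp add: measure_pmf_conv_infsetsum infsetsum_infsum pmf_abs_summable)

lemma measure_pmf_le_scaled:
  assumes "\<And>z. z \<in> A \<Longrightarrow> pmf p z \<le> c * pmf q z"
  shows "measure_pmf.prob p A \<le> c * measure_pmf.prob q A"
proof -
  have "infsum (pmf p) A \<le> infsum (\<lambda>z. c * pmf q z) A"
    by (rule infsum_mono) (auto intro: pmf_summable_on summable_on_cmult_right assms)
  also have "\<dots> = c * infsum (pmf q) A"
    by (rule infsum_cmult_right) (rule pmf_summable_on)
  finally show ?thesis by (simp add: measure_pmf_eq_infsum)
qed

lemma l1_pmf_nonneg: "0 \<le> l1_pmf p q"
  unfolding l1_pmf_def by (rule infsum_nonneg) auto

lemma measure_pmf_diff_le_l1: "measure_pmf.prob p A - measure_pmf.prob q A \<le> l1_pmf p q"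
proof -
  have bound: "\<bar>pmf p z - pmf q z\<bar> \<le> pmf p z + pmf q z" for z
    using pmf_nonneg[of p z] pmf_nonneg[of q z] by (simp add: abs_le_iff)
  have sum: "(\<lambda>z. pmf p z + pmf q z) summable_on B" for B
    by (intro summable_on_add pmf_summable_on)
  have abs_diff: "(\<lambda>z. \<bar>pmf p z - pmf q z\<bar>) summable_on B" for B
    by (rule summable_on_real_bounded[OF sum]) (simp add: bound)
  have diff: "(\<lambda>z. pmf p z - pmf q z) summable_on B" for B
    by (rule summable_on_real_bounded[OF sum]) (simp add: bound)
  have "measure_pmf.prob p A - measure_pmf.prob q A = infsum (\<lambda>z. pmf p z - pmf q z) A"
    using infsum_add[of "pmf p" A "\<lambda>z. - pmf q z"] pmf_summable_on[of p A] pmf_summable_on[of q A]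
    by (simp add: measure_pmf_eq_infsum summable_on_uminus infsum_uminus)
  also have "\<dots> \<le> infsum (\<lambda>z. \<bar>pmf p z - pmf q z\<bar>) UNIV"
    by (rule infsum_mono_neutral) (auto intro: abs_diff diff)
  finally show ?thesis by (simp add: l1_pmf_def)
qed

lemma measure_pmf_bind_pmf_of_set:
  assumes "finite S" "S \<noteq> {}"
  shows "measure_pmf.prob (bind_pmf (pmf_of_set S) f) A
    = (\<Sum>j\<in>S. measure_pmf.prob (f j) A) / real (card S)"
proof -
  have "emeasure (measure_pmf (bind_pmf (pmf_of_set S) f)) A
      = (\<Sum>j\<in>S. emeasure (measure_pmf (f j)) A) / of_nat (card S)"
    using assms by (simp add: nn_integral_pmf_of_set)
  also have "\<dots> = ennreal ((\<Sum>j\<in>S. measure_pmf.prob (f j) A) / real (card S))"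
    using assms
    by (simp add: measure_pmf.emeasure_eq_measure sum_ennreal ennreal_of_nat_eq_real_of_nat
        divide_ennreal sum_nonneg card_gt_0_iff)
  finally show ?thesis
    by (simp add: measure_pmf.emeasure_eq_measure sum_nonneg)
qed

lemma mult_ln_div_ge_diff:
  fixes x y :: real
  assumes "0 \<le> x" "0 \<le> y" "y = 0 \<Longrightarrow> x = 0"
  shows "x - y \<le> x * ln (x / y)"
proof (cases "x = 0")
  case False
  with assms(1) have x: "0 < x" by simp
  from assms(2,3) False have y: "0 < y" by (cases "y = 0") auto
  have "ln (y / x) \<le> y / x - 1" using x y by (intro ln_le_minus_one) simp
  then have "1 - y / x \<le> ln (x / y)" using x y by (simp add: ln_div)
  then have "x * (1 - y / x) \<le> x * ln (x / y)" using x by (intro mult_left_mono) auto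
  moreover have "x * (1 - y / x) = x - y" using x by (simp add: field_simps)
  ultimately show ?thesis by simp
qed (use assms in simp)

lemma pmf_diff_le_KL_summand:
  assumes "\<And>z. pmf P z \<le> c * pmf R z"
  shows "pmf P z - pmf R z \<le> pmf P z * ln (pmf P z / pmf R z)"
  by (rule mult_ln_div_ge_diff) (use assms[of z] in auto)

lemma KL_summand_summable:
  assumes dom: "\<And>z. pmf P z \<le> c * pmf R z"
  shows "(\<lambda>z. pmf P z * ln (pmf P z / pmf R z)) summable_on A"
proof (rule summable_on_real_bounded)
  show "(\<lambda>z. pmf P z * \<bar>ln c\<bar> + pmf R z) summable_on A"
    by (intro summable_on_add summable_on_cmult_left pmf_summable_on)
  fix z
  have abs_cont: "pmf R z = 0 \<Longrightarrow> pmf P z = 0"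
    using dom[of z] pmf_nonneg[of P z] by simp
  have "pmf P z * ln (pmf P z / pmf R z) \<le> pmf P z * \<bar>ln c\<bar>"
  proof (cases "pmf P z = 0")
    case False
    with abs_cont have P: "0 < pmf P z" and R: "0 < pmf R z"
      using pmf_nonneg[of P z] pmf_nonneg[of R z] by (auto simp: less_le)
    have "pmf P z / pmf R z \<le> c" using dom[of z] R by (simp add: divide_le_eq)
    moreover have "0 < pmf P z / pmf R z" using P R by simp
    ultimately have "ln (pmf P z / pmf R z) \<le> ln c"
      by (subst ln_le_cancel_iff) linarith+
    then have "ln (pmf P z / pmf R z) \<le> \<bar>ln c\<bar>" by linarith
    then show ?thesis using P by (intro mult_left_mono) auto
  qed simp
  moreover have "pmf P z - pmf R z \<le> pmf P z * ln (pmf P z / pmf R z)"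
    by (rule pmf_diff_le_KL_summand[OF dom])
  moreover have "0 \<le> pmf P z * \<bar>ln c\<bar>" by simp
  ultimately show "\<bar>pmf P z * ln (pmf P z / pmf R z)\<bar> \<le> pmf P z * \<bar>ln c\<bar> + pmf R z"
    using pmf_nonneg[of P z] pmf_nonneg[of R z] unfolding abs_le_iff by (intro conjI) linarith+
qed

lemma KL_tail_bound:
  assumes dom: "\<And>z. pmf P z \<le> c * pmf R z" and t: "0 < t"
  shows "measure_pmf.prob P {z. ln (pmf P z / pmf R z) > t} \<le> (KL_pmf P R + 1) / t"
proof -
  define A where "A = {z. ln (pmf P z / pmf R z) > t}"
  define f where "f = (\<lambda>z. pmf P z * ln (pmf P z / pmf R z))"
  have f: "f summable_on B" for B
    unfolding f_def by (rule KL_summand_summable[OF dom])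
  have "KL_pmf P R = infsum f (A \<union> - A)" by (simp add: KL_pmf_def f_def)
  also have "\<dots> = infsum f A + infsum f (- A)"
    by (rule infsum_Un_disjoint) (auto intro: f)
  finally have KL: "KL_pmf P R = infsum f A + infsum f (- A)" .
  have "t * measure_pmf.prob P A = infsum (\<lambda>z. t * pmf P z) A"
    by (simp add: measure_pmf_eq_infsum infsum_cmult_right pmf_summable_on)
  also have "\<dots> \<le> infsum f A"
  proof (rule infsum_mono[OF _ f])
    show "(\<lambda>z. t * pmf P z) summable_on A"
      by (intro summable_on_cmult_right pmf_summable_on)
    show "t * pmf P z \<le> f z" if "z \<in> A" for z
      using that mult_left_mono[of t "ln (pmf P z / pmf R z)" "pmf P z"]
      by (simp add: A_def f_def mult.commute)
  qed
  finally have on_A: "t * measure_pmf.prob P A \<le> infsum f A" .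
  have "- 1 \<le> infsum (\<lambda>z. - pmf R z) (- A)"
    using measure_pmf.prob_le_1[of R "- A"] by (simp add: infsum_uminus measure_pmf_eq_infsum)
  also have "\<dots> \<le> infsum f (- A)"
  proof (rule infsum_mono[OF _ f])
    show "(\<lambda>z. - pmf R z) summable_on (- A)"
      by (simp add: summable_on_uminus pmf_summable_on)
    show "- pmf R z \<le> f z" for z
      using pmf_diff_le_KL_summand[OF dom, of z] pmf_nonneg[of P z] unfolding f_def by linarith
  qed
  finally have "t * measure_pmf.prob P A \<le> KL_pmf P R + 1"
    using KL on_A by linarith
  then show ?thesis
    using t by (simp add: A_def pos_le_divide_eq mult.commute)
qed

lemma hypothesis_testing_bound:
  assumes "set_pmf P \<subseteq> set_pmf R"
  shows "1 - measure_pmf.prob P {z. ln (pmf P z / pmf R z) > t}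
    \<le> measure_pmf.prob P (- D) + exp t * measure_pmf.prob R D"
proof -
  define B where "B = {z. ln (pmf P z / pmf R z) > t}"
  have "measure_pmf.prob P (- B \<inter> D) \<le> exp t * measure_pmf.prob R (- B \<inter> D)"
  proof (rule measure_pmf_le_scaled)
    fix z assume z: "z \<in> - B \<inter> D"
    show "pmf P z \<le> exp t * pmf R z"
    proof (cases "z \<in> set_pmf P")
      case True
      then have P: "0 < pmf P z" and R: "0 < pmf R z"
        using assms by (auto intro: pmf_positive)
      have "ln (pmf P z / pmf R z) \<le> t" using z by (simp add: B_def)
      then have "pmf P z / pmf R z \<le> exp t"
        using P R by (metis divide_pos_pos exp_le_cancel_iff exp_ln)
      then show ?thesis using R by (simp add: divide_le_eq)
    qed (simp add: set_pmf_iff)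
  qed
  also have "\<dots> \<le> exp t * measure_pmf.prob R D"
    by (intro mult_left_mono measure_pmf.finite_measure_mono) auto
  finally have wrong_decoded: "measure_pmf.prob P (- B \<inter> D) \<le> exp t * measure_pmf.prob R D" .
  have "1 - measure_pmf.prob P B = measure_pmf.prob P (- B)"
    by (simp add: measure_pmf.prob_compl[symmetric] Compl_eq_Diff_UNIV)
  also have "\<dots> \<le> measure_pmf.prob P (- D \<union> (- B \<inter> D))"
    by (intro measure_pmf.finite_measure_mono) auto
  also have "\<dots> \<le> measure_pmf.prob P (- D) + measure_pmf.prob P (- B \<inter> D)"
    by (rule measure_Un_le) auto
  finally show ?thesis
    using wrong_decoded unfolding B_def by linarith
qed

(* \<open>0 \<le> t\<close> keeps the points where P vanishes out of the tail set, since there ln (0 / _) = 0. *)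
lemma density_tail_reference_le:
  assumes "0 \<le> t"
  shows "measure_pmf.prob R {z. ln (pmf P z / pmf R z) > t}
    \<le> exp (- t) * measure_pmf.prob P {z. ln (pmf P z / pmf R z) > t}"
proof (rule measure_pmf_le_scaled)
  fix z assume "z \<in> {z. ln (pmf P z / pmf R z) > t}"
  then have ln: "t < ln (pmf P z / pmf R z)" by simp
  with assms have "pmf P z / pmf R z \<noteq> 0" by auto
  then have ratio: "0 < pmf P z / pmf R z" and R: "0 < pmf R z"
    using pmf_nonneg[of P z] pmf_nonneg[of R z] by (auto simp: less_le)
  have "exp t < pmf P z / pmf R z"
    using ln ratio by (metis exp_less_cancel_iff exp_ln)
  then have "exp t * pmf R z \<le> pmf P z"
    using R by (simp add: less_divide_eq)
  then show "pmf R z \<le> exp (- t) * pmf P z"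
    by (simp add: exp_minus field_simps)
qed

definition code_density_tail :: "('x \<Rightarrow> 'z pmf) \<Rightarrow> nat \<Rightarrow> (nat \<Rightarrow> 'x pmf) \<Rightarrow> real \<Rightarrow> real" where
  "code_density_tail W M Qs t = (\<Sum>i<M. measure_pmf.prob (out_dist W (Qs i))
     {z. ln (pmf (out_dist W (Qs i)) z / pmf (code_out W M Qs) z) > t}) / real M"

lemma spec_prob_uniform_code:
  assumes "0 < M n" "0 < n"
  shows "spec_prob (\<lambda>n. pmf_of_set {..<M n}) (chan_comp W Qs) n a
    = code_density_tail (W n) (M n) (Qs n) (real n * a)"
proof -
  have "out_dist (chan_comp W Qs n) (pmf_of_set {..<M n}) = code_out (W n) (M n) (Qs n)"
    by (simp add: out_dist_def chan_comp_def code_out_def)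
  moreover have "a < s / real n \<longleftrightarrow> real n * a < s" for s
    using assms(2) by (simp add: pos_less_divide_eq mult.commute)
  ultimately show ?thesis
    using assms(1)
    by (simp add: spec_prob_def code_density_tail_def integral_pmf_of_set lessThan_empty_iff
        chan_comp_def out_dist_def)
qed

lemma spec_prob_nonneg: "0 \<le> spec_prob p W n a"
  unfolding spec_prob_def by (intro integral_nonneg_AE) auto

lemma spec_prob_le_1: "spec_prob p W n a \<le> 1"
  unfolding spec_prob_def
  by (rule measure_pmf.integral_le_const) (auto intro!: measure_pmf.integrable_const_bound[where B=1])

lemma measure_pmf_code_out:
  "0 < M \<Longrightarrow> measure_pmf.prob (code_out W M Qs) A
    = (\<Sum>j<M. measure_pmf.prob (out_dist W (Qs j)) A) / real M"
  by (simp add: code_out_def measure_pmf_bind_pmf_of_set lessThan_empty_iff)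

lemma set_pmf_out_dist_subset_code_out:
  "i < M \<Longrightarrow> set_pmf (out_dist W (Qs i)) \<subseteq> set_pmf (code_out W M Qs)"
  by (auto simp: code_out_def lessThan_empty_iff)

lemma pmf_out_dist_le_code_out:
  assumes "i < M"
  shows "pmf (out_dist W (Qs i)) z \<le> real M * pmf (code_out W M Qs) z"
proof -
  have "pmf (out_dist W (Qs i)) z \<le> (\<Sum>j<M. pmf (out_dist W (Qs j)) z)"
    using assms by (intro member_le_sum) auto
  then show ?thesis
    using assms measure_pmf_code_out[where M=M and W=W and Qs=Qs and A="{z}"]
    by (simp add: measure_pmf_single)
qed

lemma code_out_prob_deviation:
  assumes "i < M"
  shows "measure_pmf.prob (out_dist W (Qs i)) A - measure_pmf.prob (code_out W M Qs) A
    \<le> (\<Sum>j\<in>{..<M} - {i}. l1_pmf (out_dist W (Qs i)) (out_dist W (Qs j))) / real M"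
proof -
  define V where "V j = out_dist W (Qs j)" for j
  have M: "0 < M" using assms by simp
  have "measure_pmf.prob (V i) A - measure_pmf.prob (code_out W M Qs) A
      = (\<Sum>j<M. measure_pmf.prob (V i) A - measure_pmf.prob (V j) A) / real M"
    using M by (simp add: measure_pmf_code_out V_def sum_subtractf field_simps)
  also have "(\<Sum>j<M. measure_pmf.prob (V i) A - measure_pmf.prob (V j) A)
      = (\<Sum>j\<in>{..<M} - {i}. measure_pmf.prob (V i) A - measure_pmf.prob (V j) A)"
    using assms by (intro sum.mono_neutral_right) auto
  also have "\<dots> \<le> (\<Sum>j\<in>{..<M} - {i}. l1_pmf (V i) (V j))"
    by (intro sum_mono measure_pmf_diff_le_l1)
  finally show ?thesis
    using M by (simp add: V_def divide_right_mono)
qed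

lemma wiretap_code_pos: "wiretap_code X M Qs Ds \<Longrightarrow> 0 < M"
  by (simp add: wiretap_code_def)

lemma verdu_han_converse:
  assumes "wiretap_code X M Qs Ds"
  shows "1 - code_density_tail W M Qs t \<le> eps_B W M Qs Ds + exp t / real M"
proof -
  define V where "V i = out_dist W (Qs i)" for i
  define B where "B i = {z. ln (pmf (V i) z / pmf (code_out W M Qs) z) > t}" for i
  have M: "0 < M" and disj: "disjoint_family_on Ds {..<M}"
    using assms by (auto simp: wiretap_code_def)
  have "(\<Sum>i<M. measure_pmf.prob (code_out W M Qs) (Ds i))
      = measure_pmf.prob (code_out W M Qs) (\<Union>i<M. Ds i)"
    using disj by (intro measure_pmf.finite_measure_finite_Union[symmetric]) auto
  then have decoded: "(\<Sum>i<M. measure_pmf.prob (code_out W M Qs) (Ds i)) \<le> 1"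
    by simp
  have "1 - code_density_tail W M Qs t = (\<Sum>i<M. 1 - measure_pmf.prob (V i) (B i)) / real M"
    using M by (simp add: code_density_tail_def V_def B_def sum_subtractf field_simps)
  also have "\<dots> \<le> (\<Sum>i<M. measure_pmf.prob (V i) (- Ds i)
      + exp t * measure_pmf.prob (code_out W M Qs) (Ds i)) / real M"
    unfolding V_def B_def
    by (intro divide_right_mono sum_mono hypothesis_testing_bound set_pmf_out_dist_subset_code_out)
      auto
  also have "\<dots> = eps_B W M Qs Ds + exp t * (\<Sum>i<M. measure_pmf.prob (code_out W M Qs) (Ds i)) / real M"
    by (simp add: eps_B_def V_def sum.distrib sum_distrib_left add_divide_distrib sum_divide_distrib)
  also have "\<dots> \<le> eps_B W M Qs Ds + exp t / real M"
    using decoded by (intro add_left_mono divide_right_mono) auto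
  finally show ?thesis .
qed

lemma sum_l1_div_square_le_d_E:
  "(\<Sum>i<M. \<Sum>j\<in>{..<M} - {i}. l1_pmf (out_dist W (Qs i)) (out_dist W (Qs j))) / (real M * real M)
    \<le> d_E W M Qs"
proof -
  define S where "S = (\<Sum>i<M. \<Sum>j\<in>{..<M} - {i}. l1_pmf (out_dist W (Qs i)) (out_dist W (Qs j)))"
  have "S / (real M * real M) \<le> d_E W M Qs"
  proof (cases "M \<le> 1")
    case True
    then have "M = 0 \<or> M = 1" by auto
    then show ?thesis by (auto simp: S_def d_E_def lessThan_Suc)
  next
    case False
    have "0 \<le> S" unfolding S_def by (intro sum_nonneg l1_pmf_nonneg)
    with False have "S / (real M * real M) \<le> S / (real M * (real M - 1))"
      by (intro divide_left_mono) auto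
    then show ?thesis by (simp add: d_E_def S_def)
  qed
  then show ?thesis by (simp add: S_def)
qed

lemma code_density_tail_le_d_E:
  assumes M: "0 < M" and t: "0 \<le> t"
  shows "(1 - exp (- t)) * code_density_tail W M Qs t \<le> d_E W M Qs"
proof -
  define V where "V i = out_dist W (Qs i)" for i
  define A where "A i = {z. ln (pmf (V i) z / pmf (code_out W M Qs) z) > t}" for i
  define S where "S i = (\<Sum>j\<in>{..<M} - {i}. l1_pmf (V i) (V j))" for i
  have message: "(1 - exp (- t)) * measure_pmf.prob (V i) (A i) \<le> S i / real M" if "i < M" for i
  proof -
    have "(1 - exp (- t)) * measure_pmf.prob (V i) (A i)
        \<le> measure_pmf.prob (V i) (A i) - measure_pmf.prob (code_out W M Qs) (A i)"
      using density_tail_reference_le[OF t, of "code_out W M Qs" "V i"]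
      by (simp add: A_def algebra_simps)
    also have "\<dots> \<le> S i / real M"
      unfolding V_def S_def by (rule code_out_prob_deviation[OF that])
    finally show ?thesis .
  qed
  have "(1 - exp (- t)) * code_density_tail W M Qs t
      = (\<Sum>i<M. (1 - exp (- t)) * measure_pmf.prob (V i) (A i)) / real M"
    by (simp add: code_density_tail_def V_def A_def sum_distrib_left)
  also have "\<dots> \<le> (\<Sum>i<M. S i / real M) / real M"
    by (intro divide_right_mono sum_mono message) auto
  also have "\<dots> = (\<Sum>i<M. S i) / (real M * real M)"
    by (simp add: sum_divide_distrib[symmetric])
  also have "\<dots> \<le> d_E W M Qs"
    unfolding S_def V_def by (rule sum_l1_div_square_le_d_E)
  finally show ?thesis .
qed

lemma code_density_tail_le_I_E:
  assumes M: "0 < M" and t: "0 < t"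
  shows "code_density_tail W M Qs t \<le> (I_E W M Qs + 1) / t"
proof -
  have "code_density_tail W M Qs t
      \<le> (\<Sum>i<M. (KL_pmf (out_dist W (Qs i)) (code_out W M Qs) + 1) / t) / real M"
    unfolding code_density_tail_def
    by (intro divide_right_mono sum_mono KL_tail_bound[where c="real M"] pmf_out_dist_le_code_out)
      (use t in auto)
  also have "\<dots> = (I_E W M Qs + 1) / t"
    using M by (simp add: I_E_def sum_divide_distrib[symmetric] sum.distrib
        sum_distrib_left[symmetric] field_simps)
  finally show ?thesis .
qed

lemma I_sup_zero_le_zero:
  assumes "\<And>a. 0 < a \<Longrightarrow> (\<lambda>n. spec_prob p W n a) \<longlonglongrightarrow> 0"
  shows "I_sup 0 p W \<le> 0"
proof (rule ereal_le_epsilon2)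
  fix e :: real assume "0 < e"
  then have "limsup (\<lambda>n. ereal (spec_prob p W n e)) = ereal 0"
    using assms by (intro lim_imp_Limsup) (auto intro: tendsto_ereal)
  then have "I_sup 0 p W \<le> ereal e"
    unfolding I_sup_def by (intro Inf_lower) auto
  then show "I_sup 0 p W \<le> 0 + ereal e" by simp
qed

lemma le_I_inf_one:
  assumes "\<And>a. ereal a < L \<Longrightarrow> (\<lambda>n. spec_prob p W n a) \<longlonglongrightarrow> 1"
  shows "L \<le> I_inf 1 p W"
proof -
  have "L \<le> ereal a" if below: "liminf (\<lambda>n. ereal (spec_prob p W n a)) < 1" for a
  proof (rule ccontr)
    assume "\<not> L \<le> ereal a"
    with assms have "(\<lambda>n. spec_prob p W n a) \<longlonglongrightarrow> 1" by simp
    then have "liminf (\<lambda>n. ereal (spec_prob p W n a)) = ereal 1"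
      by (intro lim_imp_Liminf) (auto intro: tendsto_ereal)
    with below show False by simp
  qed
  then show ?thesis
    unfolding I_inf_def by (auto intro: Inf_greatest)
qed

lemma exp_div_tendsto_zero_below_rate:
  assumes M: "\<And>n. 0 < M n"
    and rate: "ereal a < liminf (\<lambda>n. ereal (ln (real (M n)) / real n))"
  shows "(\<lambda>n. exp (real n * a) / real (M n)) \<longlonglongrightarrow> 0"
proof -
  obtain b where "ereal a < ereal b"
    and b: "ereal b < liminf (\<lambda>n. ereal (ln (real (M n)) / real n))"
    using ereal_dense2[OF rate] by blast
  then have "exp (a - b) < 1" by simp
  then have geometric: "(\<lambda>n. exp (real n * (a - b))) \<longlonglongrightarrow> 0"
    using LIMSEQ_power_zero[of "exp (a - b)"] by (simp add: exp_of_nat_mult)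
  show ?thesis
  proof (rule tendsto_sandwich[OF _ _ tendsto_const geometric])
    show "\<forall>\<^sub>F n in sequentially. 0 \<le> exp (real n * a) / real (M n)" by simp
    show "\<forall>\<^sub>F n in sequentially. exp (real n * a) / real (M n) \<le> exp (real n * (a - b))"
      using less_LiminfD[OF b] eventually_gt_at_top[of 0]
    proof eventually_elim
      case (elim n)
      then have "real n * b < ln (real (M n))"
        by (simp add: pos_less_divide_eq mult.commute)
      then have "exp (real n * b) < real (M n)"
        using M[of n] by (metis exp_less_cancel_iff exp_ln of_nat_0_less_iff)
      then have "exp (real n * a) / real (M n) \<le> exp (real n * a) / exp (real n * b)"
        using M[of n] by (intro divide_left_mono) auto
      also have "\<dots> = exp (real n * (a - b))"
        by (simp add: exp_diff[symmetric] algebra_simps)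
      finally show ?case .
    qed
  qed
qed

lemma spec_prob_tendsto_one_below_rate:
  assumes code: "\<forall>n. wiretap_code (Xs n) (M n) (Qs n) (Ds n)"
    and eps: "(\<lambda>n. eps_B (WB n) (M n) (Qs n) (Ds n)) \<longlonglongrightarrow> 0"
    and rate: "ereal a < liminf (\<lambda>n. ereal (ln (real (M n)) / real n))"
  shows "(\<lambda>n. spec_prob (\<lambda>n. pmf_of_set {..<M n}) (chan_comp WB Qs) n a) \<longlonglongrightarrow> 1"
proof -
  define lower where
    "lower n = 1 - (eps_B (WB n) (M n) (Qs n) (Ds n) + exp (real n * a) / real (M n))" for n
  have M: "0 < M n" for n
    using code wiretap_code_pos by blast
  have "lower \<longlonglongrightarrow> 1 - (0 + 0)"
    unfolding lower_def by (intro tendsto_intros eps exp_div_tendsto_zero_below_rate M rate)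
  then have lower_lim: "lower \<longlonglongrightarrow> 1" by simp
  have lower_le: "\<forall>\<^sub>F n in sequentially. lower n \<le> spec_prob (\<lambda>n. pmf_of_set {..<M n}) (chan_comp WB Qs) n a"
    using eventually_gt_at_top[of 0]
  proof eventually_elim
    case (elim n)
    then show ?case
      using verdu_han_converse[OF code[rule_format, of n], of "WB n" "real n * a"]
        spec_prob_uniform_code[OF M elim, where W=WB and Qs=Qs and a=a]
      by (simp add: lower_def)
  qed
  show ?thesis
    by (rule tendsto_sandwich[OF lower_le _ lower_lim tendsto_const]) (simp add: spec_prob_le_1)
qed

lemma spec_prob_tendsto_zero_of_d_E:
  assumes M: "\<And>n. 0 < M n"
    and d_E: "(\<lambda>n. d_E (WE n) (M n) (Qs n)) \<longlonglongrightarrow> 0" and a: "0 < a"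
  shows "(\<lambda>n. spec_prob (\<lambda>n. pmf_of_set {..<M n}) (chan_comp WE Qs) n a) \<longlonglongrightarrow> 0"
proof -
  define k where "k = 1 - exp (- a)"
  have k: "0 < k" using a by (simp add: k_def)
  have upper: "\<forall>\<^sub>F n in sequentially.
      spec_prob (\<lambda>n. pmf_of_set {..<M n}) (chan_comp WE Qs) n a \<le> d_E (WE n) (M n) (Qs n) / k"
    using eventually_ge_at_top[of 1]
  proof eventually_elim
    case (elim n)
    have "k * spec_prob (\<lambda>n. pmf_of_set {..<M n}) (chan_comp WE Qs) n a
        \<le> (1 - exp (- (real n * a))) * spec_prob (\<lambda>n. pmf_of_set {..<M n}) (chan_comp WE Qs) n a"
      using elim a by (intro mult_right_mono spec_prob_nonneg) (simp add: k_def)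
    also have "\<dots> \<le> d_E (WE n) (M n) (Qs n)"
      using elim a
      by (simp add: spec_prob_uniform_code M code_density_tail_le_d_E)
    finally show ?case
      using k by (simp add: le_divide_eq mult.commute)
  qed
  have upper_lim: "(\<lambda>n. d_E (WE n) (M n) (Qs n) / k) \<longlonglongrightarrow> 0"
    using tendsto_divide[OF d_E tendsto_const[of k]] k by simp
  show ?thesis
    by (rule tendsto_sandwich[OF _ upper tendsto_const upper_lim]) (simp add: spec_prob_nonneg)
qed

lemma spec_prob_tendsto_zero_of_I_E:
  assumes M: "\<And>n. 0 < M n"
    and I_E: "(\<lambda>n. I_E (WE n) (M n) (Qs n) / real n) \<longlonglongrightarrow> 0" and a: "0 < a"
  shows "(\<lambda>n. spec_prob (\<lambda>n. pmf_of_set {..<M n}) (chan_comp WE Qs) n a) \<longlonglongrightarrow> 0"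
proof -
  have upper: "\<forall>\<^sub>F n in sequentially. spec_prob (\<lambda>n. pmf_of_set {..<M n}) (chan_comp WE Qs) n a
      \<le> (I_E (WE n) (M n) (Qs n) / real n + inverse (real n)) / a"
    using eventually_gt_at_top[of 0]
  proof eventually_elim
    case (elim n)
    have "spec_prob (\<lambda>n. pmf_of_set {..<M n}) (chan_comp WE Qs) n a
        \<le> (I_E (WE n) (M n) (Qs n) + 1) / (real n * a)"
      using elim a by (simp add: spec_prob_uniform_code M code_density_tail_le_I_E)
    also have "\<dots> = (I_E (WE n) (M n) (Qs n) / real n + inverse (real n)) / a"
      using elim a by (simp add: field_simps)
    finally show ?case .
  qed
  have upper_lim: "(\<lambda>n. (I_E (WE n) (M n) (Qs n) / real n + inverse (real n)) / a) \<longlonglongrightarrow> 0"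
    using tendsto_divide[OF tendsto_add[OF I_E lim_inverse_n] tendsto_const[of a]] a by simp
  show ?thesis
    by (rule tendsto_sandwich[OF _ upper tendsto_const upper_lim]) (simp add: spec_prob_nonneg)
qed

lemma le_wt_bound:
  fixes p :: "nat \<Rightarrow> nat pmf" and Q :: "nat \<Rightarrow> nat \<Rightarrow> 'x pmf"
  assumes "\<forall>n. \<forall>u\<in>set_pmf (p n). set_pmf (Q n u) \<subseteq> Xs n"
    and "I_sup 0 p (chan_comp WE Q) \<noteq> \<infinity>"
  shows "I_inf 1 p (chan_comp WB Q) - I_sup 0 p (chan_comp WE Q) \<le> wt_bound Xs WB WE"
  unfolding wt_bound_def using assms by (intro Sup_upper) blast

lemma code_rate_le_wt_bound:
  fixes Qs :: "nat \<Rightarrow> nat \<Rightarrow> 'x pmf"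
  assumes code: "\<forall>n. wiretap_code (Xs n) (M n) (Qs n) (Ds n)"
    and eps: "(\<lambda>n. eps_B (WB n) (M n) (Qs n) (Ds n)) \<longlonglongrightarrow> 0"
    and eve: "\<And>a. 0 < a \<Longrightarrow>
      (\<lambda>n. spec_prob (\<lambda>n. pmf_of_set {..<M n}) (chan_comp WE Qs) n a) \<longlonglongrightarrow> 0"
  shows "liminf (\<lambda>n. ereal (ln (real (M n)) / real n)) \<le> wt_bound Xs WB WE"
proof -
  define p :: "nat \<Rightarrow> nat pmf" where "p n = pmf_of_set {..<M n}" for n
  have "set_pmf (p n) = {..<M n}" for n
    using code wiretap_code_pos[of "Xs n" "M n" "Qs n" "Ds n"] by (simp add: p_def lessThan_empty_iff)
  then have encoder: "\<forall>n. \<forall>u\<in>set_pmf (p n). set_pmf (Qs n u) \<subseteq> Xs n"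
    using code by (auto simp: wiretap_code_def)
  have bob: "liminf (\<lambda>n. ereal (ln (real (M n)) / real n)) \<le> I_inf 1 p (chan_comp WB Qs)"
    unfolding p_def by (intro le_I_inf_one spec_prob_tendsto_one_below_rate[OF code eps])
  have eve: "I_sup 0 p (chan_comp WE Qs) \<le> 0"
    unfolding p_def by (intro I_sup_zero_le_zero eve)
  have "I_inf 1 p (chan_comp WB Qs) - 0 \<le> I_inf 1 p (chan_comp WB Qs) - I_sup 0 p (chan_comp WE Qs)"
    using eve by (intro ereal_minus_mono) auto
  also have "\<dots> \<le> wt_bound Xs WB WE"
    using encoder eve by (intro le_wt_bound) auto
  finally show ?thesis
    using bob by simp
qed

theorem lemma6:
  fixes Xs :: "nat \<Rightarrow> 'x set"
    and WB :: "nat \<Rightarrow> 'x \<Rightarrow> 'y pmf"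
    and WE :: "nat \<Rightarrow> 'x \<Rightarrow> 'z pmf"
  shows "C_d Xs WB WE \<le> wt_bound Xs WB WE \<and> C_I Xs WB WE \<le> wt_bound Xs WB WE"
proof
  show "C_d Xs WB WE \<le> wt_bound Xs WB WE"
    unfolding C_d_def
  proof (rule Sup_least, clarify)
    fix M Qs Ds
    assume "\<forall>n. wiretap_code (Xs n) (M n) (Qs n) (Ds n)"
      and "(\<lambda>n. eps_B (WB n) (M n) (Qs n) (Ds n)) \<longlonglongrightarrow> 0"
      and "(\<lambda>n. d_E (WE n) (M n) (Qs n)) \<longlonglongrightarrow> 0"
    then show "liminf (\<lambda>n. ereal (ln (real (M n)) / real n)) \<le> wt_bound Xs WB WE"
      by (intro code_rate_le_wt_bound spec_prob_tendsto_zero_of_d_E) (auto intro: wiretap_code_pos)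
  qed
  show "C_I Xs WB WE \<le> wt_bound Xs WB WE"
    unfolding C_I_def
  proof (rule Sup_least, clarify)
    fix M Qs Ds
    assume "\<forall>n. wiretap_code (Xs n) (M n) (Qs n) (Ds n)"
      and "(\<lambda>n. eps_B (WB n) (M n) (Qs n) (Ds n)) \<longlonglongrightarrow> 0"
      and "(\<lambda>n. I_E (WE n) (M n) (Qs n) / real n) \<longlonglongrightarrow> 0"
    then show "liminf (\<lambda>n. ereal (ln (real (M n)) / real n)) \<le> wt_bound Xs WB WE"
      by (intro code_rate_le_wt_bound spec_prob_tendsto_zero_of_I_E) (auto intro: wiretap_code_pos)
  qed
qed

end
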